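(* Let $\alpha>0$, $\eta=\alpha/(L+\alpha)$. Consider AggGCG (primal) with $y_0\in\mathrm{dom}\, h$, $s_0\in\mathbb{R}^n$: for $k\ge0$, $x_{k+1}=\mathrm{argmin}_x\{\langle s_k,x\rangle+h^\alpha(x)\}$, $y_{k+1}=(1-\eta)y_k+\eta x_{k+1}$, $s_{k+1}=(1-\eta)s_k+\eta\nabla f(y_k)$. Consider AggGCG (dual) with $z_0\in\mathrm{dom}\, f^*$, $v_0\in\mathbb{R}^n$: for $k\ge0$, $\bar z_{k+1}=\mathrm{argmin}_z\{-\langle v_k,z\rangle+f^*(z)\}$, $z_{k+1}=(1-\eta)z_k+\eta\bar z_{k+1}$, $v_{k+1}=(1-\eta)v_k+\eta\nabla(h^\alpha)^*(-z_k)$. If $s_0=z_0$ and $v_0=y_0$, then for every $k\ge0$: $y_k=v_k$, $s_k=z_k$, $x_{k+1}=\nabla(h^\alpha)^*(-z_k)$, and $\nabla f(y_k)=\bar z_{k+1}$.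
   Context: Let $\|\cdot\|$ be a norm on $\mathbb{R}^n$ with dual norm $\|\cdot\|_*$. Let $f:\mathbb{R}^n\to\mathbb{R}$ be convex, differentiable and $L$-smooth ($L>0$) with respect to $\|\cdot\|$, $h:\mathbb{R}^n\to(-\infty,\infty]$ closed proper convex with bounded domain, and $w:\mathbb{R}^n\to[0,+\infty]$ closed, $1$-strongly convex with respect to $\|\cdot\|$ on $\mathrm{dom}\, h$, with $\max_{\mathrm{dom}\, h}w<\infty$. Let $h^\alpha=h+\alpha w$; $^*$ denotes convex conjugate ($(h^\alpha)^*$ is differentiable, $f^*$ is $(1/L)$-strongly convex w.r.t. $\|\cdot\|_*$). *)

theory Defs
  imports "HOL-Analysis.Analysis" "HOL-Library.Extended_Real"
begin

definition is_norm :: "('a::real_vector \<Rightarrow> real) \<Rightarrow> bool" where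
  "is_norm N \<longleftrightarrow> (\<forall>x. 0 \<le> N x) \<and> (\<forall>x. N x = 0 \<longleftrightarrow> x = 0)
     \<and> (\<forall>c x. N (c *\<^sub>R x) = \<bar>c\<bar> * N x) \<and> (\<forall>x y. N (x + y) \<le> N x + N y)"

definition dual_norm :: "('a::real_inner \<Rightarrow> real) \<Rightarrow> 'a \<Rightarrow> real" where
  "dual_norm N y = Sup {y \<bullet> x | x. N x \<le> 1}"

definition grad :: "('a::real_inner \<Rightarrow> real) \<Rightarrow> 'a \<Rightarrow> 'a" where
  "grad F x = (SOME g. (F has_derivative (\<lambda>d. g \<bullet> d)) (at x))"

definition L_smooth :: "('a::real_inner \<Rightarrow> real) \<Rightarrow> real \<Rightarrow> ('a \<Rightarrow> real) \<Rightarrow> bool" where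
  "L_smooth N L F \<longleftrightarrow> (\<forall>x. F differentiable at x) \<and>
     (\<forall>x y. dual_norm N (grad F x - grad F y) \<le> L * N (x - y))"

definition edom :: "('a \<Rightarrow> ereal) \<Rightarrow> 'a set" where
  "edom F = {x. F x < \<infinity>}"

definition eproper :: "('a \<Rightarrow> ereal) \<Rightarrow> bool" where
  "eproper F \<longleftrightarrow> (\<forall>x. F x \<noteq> -\<infinity>) \<and> (\<exists>x. F x \<noteq> \<infinity>)"

definition econvex :: "('a::real_vector \<Rightarrow> ereal) \<Rightarrow> bool" where
  "econvex F \<longleftrightarrow> (\<forall>x y t. 0 < t \<and> t < 1 \<longrightarrow>
     F (t *\<^sub>R x + (1 - t) *\<^sub>R y) \<le> ereal t * F x + ereal (1 - t) * F y)"

text \<open>Closed = lower semicontinuous = closed epigraph.\<close>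
definition eclosed :: "('a::topological_space \<Rightarrow> ereal) \<Rightarrow> bool" where
  "eclosed F \<longleftrightarrow> closed {(x, t::real). F x \<le> ereal t}"

definition strongly_convex_on_wrt ::
  "('a::real_vector \<Rightarrow> real) \<Rightarrow> 'a set \<Rightarrow> ('a \<Rightarrow> ereal) \<Rightarrow> bool" where
  "strongly_convex_on_wrt N S F \<longleftrightarrow> (\<forall>x\<in>S. \<forall>y\<in>S. \<forall>t. 0 < t \<and> t < 1 \<longrightarrow>
     F (t *\<^sub>R x + (1 - t) *\<^sub>R y) \<le>
       ereal t * F x + ereal (1 - t) * F y - ereal (t * (1 - t) / 2 * (N (x - y))\<^sup>2))"

definition fconj :: "('a::real_inner \<Rightarrow> ereal) \<Rightarrow> 'a \<Rightarrow> ereal" where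
  "fconj F y = (SUP x. ereal (y \<bullet> x) - F x)"

definition is_argmin :: "('a \<Rightarrow> ereal) \<Rightarrow> 'a \<Rightarrow> bool" where
  "is_argmin F x \<longleftrightarrow> F x < \<infinity> \<and> (\<forall>u. F x \<le> F u)"

definition halpha :: "('a \<Rightarrow> ereal) \<Rightarrow> ('a \<Rightarrow> ereal) \<Rightarrow> real \<Rightarrow> 'a \<Rightarrow> ereal" where
  "halpha h w \<alpha> x = h x + ereal \<alpha> * w x"

end

theory Submission
  imports Defs
begin

(* Both identities rest on two facts about convex conjugates. Since h + alpha w is
   alpha-strongly convex, the minimiser x of <s, u> + h^alpha(u) satisfies a quadratic growth
   bound; this squeezes (h^alpha)^* near -s between two affine functions with slope x that
   differ by O(|p + s|^2), so (h^alpha)^* is differentiable at -s with gradient x. Dually, a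
   minimiser z of -<y, u> + f^*(u) attains equality in the Fenchel-Young inequality, so y
   minimises f - <z, .> and z = grad f(y). With these, both schemes run the same recursion
   and the identities follow by induction on k, for any step size eta; of the smoothness of f
   only its differentiability is needed. *)

lemma grad_eqI:
  fixes F :: "'a::real_inner \<Rightarrow> real"
  assumes "(F has_derivative (\<lambda>d. g \<bullet> d)) (at x)"
  shows "grad F x = g"
proof -
  have "(F has_derivative (\<lambda>d. grad F x \<bullet> d)) (at x)"
    unfolding grad_def by (rule someI[of _ g]) (rule assms)
  then have "(\<lambda>d. grad F x \<bullet> d) = (\<lambda>d. g \<bullet> d)"
    using assms has_derivative_unique by blast
  then have "(grad F x - g) \<bullet> (grad F x - g) = 0"
    by (metis inner_diff_left right_minus_eq)
  then show ?thesis by simp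
qed

lemma has_derivative_grad:
  fixes F :: "'a::euclidean_space \<Rightarrow> real"
  assumes "F differentiable at x"
  shows "(F has_derivative (\<lambda>d. grad F x \<bullet> d)) (at x)"
proof -
  obtain D where D: "(F has_derivative D) (at x)"
    using assms unfolding differentiable_def by blast
  then have lin: "linear D" by (rule has_derivative_linear)
  define g where "g = (\<Sum>b\<in>Basis. D b *\<^sub>R b)"
  have "D d = g \<bullet> d" for d
  proof -
    have "D d = D (\<Sum>b\<in>Basis. (d \<bullet> b) *\<^sub>R b)" by (simp add: euclidean_representation)
    also have "\<dots> = (\<Sum>b\<in>Basis. (d \<bullet> b) * D b)"
      by (simp add: linear_sum[OF lin] linear_scale[OF lin])
    also have "\<dots> = g \<bullet> d"
      unfolding g_def by (simp add: inner_sum_right inner_commute mult.commute)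
    finally show ?thesis .
  qed
  then have "(F has_derivative (\<lambda>d. g \<bullet> d)) (at x)"
    using D by (metis ext)
  then show ?thesis using grad_eqI by metis
qed

lemma has_derivative_at_quadratic_bound:
  fixes g :: "'a::real_normed_vector \<Rightarrow> 'b::real_normed_vector"
  assumes "bounded_linear D" and "C > 0"
    and bound: "\<And>p. norm (g p - g y - D (p - y)) \<le> C * (norm (p - y))\<^sup>2"
  shows "(g has_derivative D) (at y)"
  unfolding has_derivative_at_alt
proof (intro conjI allI impI assms)
  fix e :: real assume "e > 0"
  show "\<exists>d>0. \<forall>p. norm (p - y) < d \<longrightarrow> norm (g p - g y - D (p - y)) \<le> e * norm (p - y)"
  proof (intro exI[of _ "e / C"] conjI allI impI)
    show "e / C > 0" using \<open>e > 0\<close> \<open>C > 0\<close> by simp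
    fix p assume "norm (p - y) < e / C"
    then have "C * norm (p - y) \<le> e" using \<open>C > 0\<close> by (simp add: field_simps)
    then have "C * (norm (p - y))\<^sup>2 \<le> e * norm (p - y)"
      by (simp add: power2_eq_square mult_right_mono flip: mult.assoc)
    then show "norm (g p - g y - D (p - y)) \<le> e * norm (p - y)" using bound[of p] by simp
  qed
qed

lemma convex_on_grad_inequality:
  fixes f :: "'a::euclidean_space \<Rightarrow> real"
  assumes cvx: "convex_on UNIV f" and dif: "f differentiable at y"
  shows "f y + grad f y \<bullet> (x - y) \<le> f x"
proof -
  define q where "q t = f (y + t *\<^sub>R (x - y))" for t :: real
  have "convex_on UNIV q"
  proof (rule convex_onI)
    fix t a b :: real assume t: "0 < t" "t < 1"
    have "y + ((1 - t) * a + t * b) *\<^sub>R (x - y)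
        = (1 - t) *\<^sub>R (y + a *\<^sub>R (x - y)) + t *\<^sub>R (y + b *\<^sub>R (x - y))"
      by (simp add: algebra_simps)
    then show "q ((1 - t) *\<^sub>R a + t *\<^sub>R b) \<le> (1 - t) * q a + t * q b"
      unfolding q_def using convex_onD[OF cvx, of t] t by simp
  qed simp
  moreover have "(q has_real_derivative grad f y \<bullet> (x - y)) (at 0)"
  proof -
    have "((\<lambda>t. y + t *\<^sub>R (x - y)) has_derivative (\<lambda>t. t *\<^sub>R (x - y))) (at 0)"
      by (auto intro!: derivative_eq_intros)
    moreover have "(f has_derivative (\<lambda>d. grad f y \<bullet> d)) (at (y + 0 *\<^sub>R (x - y)))"
      using has_derivative_grad[OF dif] by simp
    ultimately have "(q has_derivative (\<lambda>t. grad f y \<bullet> (t *\<^sub>R (x - y)))) (at 0)"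
      unfolding q_def by (rule has_derivative_compose)
    then show ?thesis
      unfolding has_field_derivative_def by (simp add: mult.commute[of _ "grad f y \<bullet> (x - y)"])
  qed
  ultimately have "q 0 + grad f y \<bullet> (x - y) * (1 - 0) \<le> q 1"
    using convex_on_imp_above_tangent[of UNIV q 0 1 "grad f y \<bullet> (x - y)"] by simp
  then show ?thesis unfolding q_def by simp
qed

lemma fenchel_young: "ereal (u \<bullet> x) - F x \<le> fconj F u"
  unfolding fconj_def by (rule SUP_upper) simp

lemma fconj_at_grad:
  fixes f :: "'a::euclidean_space \<Rightarrow> real"
  assumes "convex_on UNIV f" and "f differentiable at y"
  shows "fconj (\<lambda>u. ereal (f u)) (grad f y) = ereal (grad f y \<bullet> y - f y)"
proof (rule antisym)
  show "fconj (\<lambda>u. ereal (f u)) (grad f y) \<le> ereal (grad f y \<bullet> y - f y)"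
  proof (unfold fconj_def, rule SUP_least)
    fix x
    show "ereal (grad f y \<bullet> x) - ereal (f x) \<le> ereal (grad f y \<bullet> y - f y)"
      using convex_on_grad_inequality[OF assms, of x] by (simp add: inner_diff_right)
  qed
  show "ereal (grad f y \<bullet> y - f y) \<le> fconj (\<lambda>u. ereal (f u)) (grad f y)"
    using fenchel_young[of "grad f y" y "\<lambda>u. ereal (f u)"] by simp
qed

lemma argmin_fconj_eq_grad:
  fixes f :: "'a::euclidean_space \<Rightarrow> real"
  assumes cvx: "convex_on UNIV f" and dif: "f differentiable at y"
    and argmin: "is_argmin (\<lambda>u. ereal (- (y \<bullet> u)) + fconj (\<lambda>u. ereal (f u)) u) z"
  shows "grad f y = z"
proof -
  let ?F = "fconj (\<lambda>u. ereal (f u))"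
  have "ereal (- (y \<bullet> z)) + ?F z \<le> ereal (- (y \<bullet> grad f y)) + ?F (grad f y)"
    using argmin unfolding is_argmin_def by blast
  also have "\<dots> = ereal (- f y)"
    using fconj_at_grad[OF cvx dif] by (simp add: inner_commute)
  finally have Fz: "?F z \<le> ereal (z \<bullet> y - f y)"
    by (cases "?F z") (auto simp: inner_commute)
  have min: "f y - z \<bullet> y \<le> f x - z \<bullet> x" for x
    using order_trans[OF fenchel_young[of z x "\<lambda>u. ereal (f u)"] Fz] by simp
  have "((\<lambda>x. f x - z \<bullet> x) has_derivative (\<lambda>d. grad f y \<bullet> d - z \<bullet> d)) (at y)"
    using has_derivative_grad[OF dif] by (auto intro!: derivative_eq_intros)
  then have "(\<lambda>d. grad f y \<bullet> d - z \<bullet> d) = (\<lambda>d. 0)"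
    using min by (intro differential_zero_maxmin[of y UNIV]) auto
  then have "(grad f y - z) \<bullet> (grad f y - z) = 0"
    by (metis inner_diff_left)
  then show ?thesis by simp
qed

lemma fconj_le_quadratic:
  fixes \<phi> :: "'a::real_inner \<Rightarrow> ereal"
  assumes not_minf: "\<And>u. \<phi> u \<noteq> -\<infinity>" and "K > 0"
    and growth: "\<And>u. \<phi> u < \<infinity> \<Longrightarrow>
      y \<bullet> u - real_of_ereal (\<phi> u) + K * (norm (u - x))\<^sup>2 \<le> y \<bullet> x - real_of_ereal (\<phi> x)"
  shows "fconj \<phi> p \<le> ereal (p \<bullet> x - real_of_ereal (\<phi> x) + (norm (p - y))\<^sup>2 / (4 * K))"
  unfolding fconj_def
proof (rule SUP_least)
  fix u
  show "ereal (p \<bullet> u) - \<phi> u \<le> ereal (p \<bullet> x - real_of_ereal (\<phi> x) + (norm (p - y))\<^sup>2 / (4 * K))"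
  proof (cases "\<phi> u < \<infinity>")
    case True
    define r where "r = norm (u - x)"
    define \<delta> where "\<delta> = norm (p - y)"
    have "(p - y) \<bullet> (u - x) \<le> \<delta> * r"
      unfolding \<delta>_def r_def by (rule norm_cauchy_schwarz)
    moreover have "\<delta> * r - K * r\<^sup>2 \<le> \<delta>\<^sup>2 / (4 * K)"
    proof -
      have "4 * K * (\<delta> * r - K * r\<^sup>2) \<le> \<delta>\<^sup>2"
        using zero_le_power2[of "\<delta> - 2 * K * r"] by (simp add: power2_eq_square algebra_simps)
      then show ?thesis using \<open>K > 0\<close> by (simp add: field_simps)
    qed
    moreover have "p \<bullet> u = y \<bullet> u + (p - y) \<bullet> x + (p - y) \<bullet> (u - x)"
      and "p \<bullet> x = y \<bullet> x + (p - y) \<bullet> x"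
      by (simp_all add: inner_diff_left inner_diff_right)
    ultimately have "p \<bullet> u - real_of_ereal (\<phi> u) \<le> p \<bullet> x - real_of_ereal (\<phi> x) + \<delta>\<^sup>2 / (4 * K)"
      using growth[OF True] unfolding r_def by linarith
    moreover have "\<phi> u = ereal (real_of_ereal (\<phi> u))"
      using True not_minf[of u] by (cases "\<phi> u") auto
    ultimately show ?thesis unfolding \<delta>_def by (metis ereal_minus(1) ereal_less_eq(3))
  qed (simp add: top.not_eq_extremum)
qed

lemma fconj_has_derivative_at:
  fixes \<phi> :: "'a::real_inner \<Rightarrow> ereal"
  assumes not_minf: "\<And>u. \<phi> u \<noteq> -\<infinity>" and "\<phi> x < \<infinity>" and "K > 0"
    and growth: "\<And>u. \<phi> u < \<infinity> \<Longrightarrow>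
      y \<bullet> u - real_of_ereal (\<phi> u) + K * (norm (u - x))\<^sup>2 \<le> y \<bullet> x - real_of_ereal (\<phi> x)"
  shows "((\<lambda>p. real_of_ereal (fconj \<phi> p)) has_derivative (\<lambda>d. x \<bullet> d)) (at y)"
proof -
  let ?g = "\<lambda>p. real_of_ereal (fconj \<phi> p)"
  have "\<phi> x = ereal (real_of_ereal (\<phi> x))"
    using \<open>\<phi> x < \<infinity>\<close> not_minf[of x] by (cases "\<phi> x") auto
  then have lower: "ereal (p \<bullet> x - real_of_ereal (\<phi> x)) \<le> fconj \<phi> p" for p
    using fenchel_young[of p x \<phi>] by (metis ereal_minus(1))
  have bounds: "p \<bullet> x - real_of_ereal (\<phi> x) \<le> ?g p \<and>
      ?g p \<le> p \<bullet> x - real_of_ereal (\<phi> x) + (norm (p - y))\<^sup>2 / (4 * K)" for p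
    using lower[of p] fconj_le_quadratic[OF not_minf \<open>K > 0\<close> growth, of p]
    by (cases "fconj \<phi> p") auto
  have "\<bar>?g p - ?g y - x \<bullet> (p - y)\<bar> \<le> 1 / (4 * K) * (norm (p - y))\<^sup>2" for p
    using bounds[of p] bounds[of y] \<open>K > 0\<close> by (simp add: inner_diff_right inner_commute)
  then show ?thesis
    using \<open>K > 0\<close>
    by (intro has_derivative_at_quadratic_bound[where C = "1 / (4 * K)"] bounded_linear_inner_right)
      auto
qed

lemma is_norm_le_norm:
  fixes N :: "'a::euclidean_space \<Rightarrow> real"
  assumes "is_norm N"
  shows "N x \<le> (\<Sum>b\<in>Basis. N b) * norm x"
proof -
  have N_nonneg: "\<And>x. 0 \<le> N x" and N_scale: "\<And>c x. N (c *\<^sub>R x) = \<bar>c\<bar> * N x"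
    and N_triangle: "\<And>x y. N (x + y) \<le> N x + N y" and N_zero: "N 0 = 0"
    using assms unfolding is_norm_def by auto
  have N_sum: "N (\<Sum>b\<in>B. g b) \<le> (\<Sum>b\<in>B. N (g b))" if "finite B" for B and g :: "'a \<Rightarrow> 'a"
    using that by (induction B rule: finite_induct) (auto simp: N_zero intro: order_trans[OF N_triangle])
  have "N x = N (\<Sum>b\<in>Basis. (x \<bullet> b) *\<^sub>R b)" by (simp add: euclidean_representation)
  also have "\<dots> \<le> (\<Sum>b\<in>Basis. \<bar>x \<bullet> b\<bar> * N b)"
    using N_sum[of Basis "\<lambda>b. (x \<bullet> b) *\<^sub>R b"] by (simp add: N_scale)
  also have "\<dots> \<le> (\<Sum>b\<in>Basis. norm x * N b)"
    by (rule sum_mono) (simp add: N_nonneg Basis_le_norm mult_right_mono)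
  finally show ?thesis by (simp add: sum_distrib_left mult.commute)
qed

lemma is_norm_continuous:
  fixes N :: "'a::euclidean_space \<Rightarrow> real"
  assumes "is_norm N"
  shows "continuous_on UNIV N"
proof -
  have N_nonneg: "\<And>x. 0 \<le> N x" and N_scale: "\<And>c x. N (c *\<^sub>R x) = \<bar>c\<bar> * N x"
    and N_triangle: "\<And>x y. N (x + y) \<le> N x + N y"
    using assms unfolding is_norm_def by auto
  have "dist (N x) (N y) \<le> (\<Sum>b\<in>Basis. N b) * dist x y" for x y
  proof -
    have "N x - N y \<le> N (x - y)" and "N y - N x \<le> N (x - y)"
      using N_triangle[of "x - y" y] N_triangle[of "y - x" x] N_scale[of "-1" "x - y"] by simp_all
    then have "dist (N x) (N y) \<le> N (x - y)" by (simp add: dist_real_def)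
    also have "\<dots> \<le> (\<Sum>b\<in>Basis. N b) * dist x y"
      using is_norm_le_norm[OF assms] by (simp add: dist_norm)
    finally show ?thesis .
  qed
  then have "(\<Sum>b\<in>Basis. N b)-lipschitz_on UNIV N"
    by (intro lipschitz_onI) (auto intro: sum_nonneg N_nonneg)
  then show ?thesis by (rule lipschitz_on_continuous_on)
qed

lemma is_norm_ge_norm:
  fixes N :: "'a::euclidean_space \<Rightarrow> real"
  assumes "is_norm N"
  obtains c where "c > 0" and "\<And>x. c * norm x \<le> N x"
proof -
  have N_pos: "N x > 0" if "x \<noteq> 0" for x
    using assms that unfolding is_norm_def by (metis less_eq_real_def)
  have N_scale: "N (c *\<^sub>R x) = \<bar>c\<bar> * N x" for c x
    using assms unfolding is_norm_def by blast
  obtain b :: 'a where "b \<in> Basis" using nonempty_Basis by blast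
  then have "sphere (0::'a) 1 \<noteq> {}" by (metis norm_Basis mem_sphere_0 empty_iff)
  then obtain x0 where x0: "x0 \<in> sphere 0 1" and min: "\<And>x. x \<in> sphere 0 1 \<Longrightarrow> N x0 \<le> N x"
    using continuous_attains_inf[OF compact_sphere _
        continuous_on_subset[OF is_norm_continuous[OF assms]]]
    by blast
  show ?thesis
  proof
    show "N x0 > 0" using x0 by (intro N_pos) auto
    show "N x0 * norm x \<le> N x" for x
    proof (cases "x = 0")
      case True
      then show ?thesis using N_scale[of 0 x] by simp
    next
      case False
      then have "N x0 \<le> N ((1 / norm x) *\<^sub>R x)" by (intro min) simp
      also have "\<dots> = N x / norm x" by (simp add: N_scale)
      finally show ?thesis using False by (simp add: field_simps)
    qed
  qed
qed

lemma midpoint_eq_convex_comb: "midpoint u x = (1/2::real) *\<^sub>R u + (1 - 1/2::real) *\<^sub>R x"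
  by (simp add: midpoint_def scaleR_add_right)

lemma econvex_midpoint_in_edom:
  assumes "econvex h" and "u \<in> edom h" and "x \<in> edom h"
  shows "midpoint u x \<in> edom h"
proof -
  have "h (midpoint u x) \<le> ereal (1/2) * h u + ereal (1 - 1/2) * h x"
    using assms(1)[unfolded econvex_def, rule_format, of "1/2" u x]
    unfolding midpoint_eq_convex_comb by simp
  also have "\<dots> < \<infinity>"
    using assms(2,3) unfolding edom_def by (cases "h u"; cases "h x") auto
  finally show ?thesis unfolding edom_def by simp
qed

lemma argmin_midpoint_quadratic_growth:
  fixes \<Phi> :: "'a::real_inner \<Rightarrow> real"
  assumes min: "\<And>v. v \<in> D \<Longrightarrow> s \<bullet> x + \<Phi> x \<le> s \<bullet> v + \<Phi> v"
    and "midpoint u x \<in> D"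
    and mid: "\<Phi> (midpoint u x) \<le> (\<Phi> u + \<Phi> x) / 2 - \<mu> / 8 * (N (u - x))\<^sup>2"
  shows "s \<bullet> x + \<Phi> x + \<mu> / 4 * (N (u - x))\<^sup>2 \<le> s \<bullet> u + \<Phi> u"
proof -
  have "s \<bullet> x + \<Phi> x \<le> s \<bullet> midpoint u x + \<Phi> (midpoint u x)"
    using min \<open>midpoint u x \<in> D\<close> by blast
  also have "\<dots> \<le> (s \<bullet> u + \<Phi> u + s \<bullet> x + \<Phi> x) / 2 - \<mu> / 8 * (N (u - x))\<^sup>2"
    using mid by (simp add: midpoint_def inner_add_right field_simps)
  finally show ?thesis by (simp add: field_simps)
qed

context
  fixes h w :: "'a::real_inner \<Rightarrow> ereal" and N :: "'a \<Rightarrow> real" and \<alpha> :: real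
  assumes h_not_minf: "\<And>u. h u \<noteq> -\<infinity>" and h_convex: "econvex h"
    and w_nonneg: "\<And>u. 0 \<le> w u" and w_finite: "\<And>u. u \<in> edom h \<Longrightarrow> w u < \<infinity>"
    and w_strong: "strongly_convex_on_wrt N (edom h) w"
    and alpha_pos: "\<alpha> > 0"
begin

lemma halpha_not_minf: "halpha h w \<alpha> u \<noteq> -\<infinity>"
  using h_not_minf[of u] w_nonneg[of u] alpha_pos
  by (cases "h u"; cases "w u") (auto simp: halpha_def)

lemma halpha_eq_ereal:
  assumes "u \<in> edom h"
  shows "halpha h w \<alpha> u = ereal (real_of_ereal (h u) + \<alpha> * real_of_ereal (w u))"
  using assms h_not_minf[of u] w_nonneg[of u] w_finite[OF assms]
  by (cases "h u"; cases "w u") (auto simp: halpha_def edom_def)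

lemma edom_halpha: "edom (halpha h w \<alpha>) = edom h"
proof (intro set_eqI iffI)
  fix u assume "u \<in> edom h"
  then show "u \<in> edom (halpha h w \<alpha>)"
    using halpha_eq_ereal unfolding edom_def by simp
next
  fix u assume "u \<in> edom (halpha h w \<alpha>)"
  moreover have "ereal \<alpha> * w u \<noteq> -\<infinity>"
    using w_nonneg[of u] alpha_pos by (cases "w u") auto
  ultimately show "u \<in> edom h"
    unfolding edom_def halpha_def by (cases "h u") auto
qed

lemma halpha_midpoint_le:
  assumes u: "u \<in> edom h" and x: "x \<in> edom h"
  shows "real_of_ereal (halpha h w \<alpha> (midpoint u x))
    \<le> (real_of_ereal (halpha h w \<alpha> u) + real_of_ereal (halpha h w \<alpha> x)) / 2
      - \<alpha> / 8 * (N (u - x))\<^sup>2"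
proof -
  define m where "m = midpoint u x"
  define H where "H v = real_of_ereal (h v)" for v
  define W where "W v = real_of_ereal (w v)" for v
  have m: "m \<in> edom h" unfolding m_def by (rule econvex_midpoint_in_edom[OF h_convex u x])
  have fin: "h v = ereal (H v)" "w v = ereal (W v)" if "v \<in> edom h" for v
    using that h_not_minf[of v] w_nonneg[of v] w_finite[OF that] unfolding edom_def H_def W_def
    by (cases "h v"; cases "w v"; simp)+
  have "h m \<le> ereal (1/2) * h u + ereal (1 - 1/2) * h x"
    using h_convex[unfolded econvex_def, rule_format, of "1/2" u x]
    unfolding m_def midpoint_eq_convex_comb by simp
  then have hm: "H m \<le> (H u + H x) / 2"
    using fin[OF m] fin[OF u] fin[OF x] by simp
  have "w m \<le> ereal (1/2) * w u + ereal (1 - 1/2) * w x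
      - ereal ((1/2) * (1 - 1/2) / 2 * (N (u - x))\<^sup>2)"
    using w_strong[unfolded strongly_convex_on_wrt_def, rule_format, OF u x, of "1/2"]
    unfolding m_def midpoint_eq_convex_comb by simp
  then have wm: "W m \<le> (W u + W x) / 2 - (N (u - x))\<^sup>2 / 8"
    using fin[OF m] fin[OF u] fin[OF x] by (simp add: add_divide_distrib)
  show ?thesis
    using hm mult_left_mono[OF wm less_imp_le[OF alpha_pos]]
    unfolding m_def[symmetric] halpha_eq_ereal[OF m] halpha_eq_ereal[OF u] halpha_eq_ereal[OF x]
    unfolding H_def W_def by (simp add: algebra_simps)
qed

lemma grad_fconj_halpha_eq_argmin:
  assumes "c > 0" and c: "\<And>v. c * norm v \<le> N v"
    and argmin: "is_argmin (\<lambda>u. ereal (s \<bullet> u) + halpha h w \<alpha> u) x"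
  shows "grad (\<lambda>u. real_of_ereal (fconj (halpha h w \<alpha>) u)) (- s) = x"
proof -
  define \<Phi> where "\<Phi> u = real_of_ereal (halpha h w \<alpha> u)" for u
  have dom: "halpha h w \<alpha> u < \<infinity> \<longleftrightarrow> u \<in> edom h" for u
    using edom_halpha unfolding edom_def by blast
  have fin: "halpha h w \<alpha> u = ereal (\<Phi> u)" if "u \<in> edom h" for u
    using halpha_eq_ereal[OF that] unfolding \<Phi>_def by simp
  have x: "x \<in> edom h"
    using argmin dom unfolding is_argmin_def by simp
  have min: "s \<bullet> x + \<Phi> x \<le> s \<bullet> v + \<Phi> v" if "v \<in> edom h" for v
  proof -
    have "ereal (s \<bullet> x) + halpha h w \<alpha> x \<le> ereal (s \<bullet> v) + halpha h w \<alpha> v"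
      using argmin unfolding is_argmin_def by blast
    then show ?thesis unfolding fin[OF that] fin[OF x] by simp
  qed
  have growth: "- s \<bullet> u - \<Phi> u + \<alpha> * c\<^sup>2 / 4 * (norm (u - x))\<^sup>2 \<le> - s \<bullet> x - \<Phi> x"
    if u: "u \<in> edom h" for u
  proof -
    have "s \<bullet> x + \<Phi> x + \<alpha> / 4 * (N (u - x))\<^sup>2 \<le> s \<bullet> u + \<Phi> u"
      by (rule argmin_midpoint_quadratic_growth[where \<Phi> = \<Phi> and N = N, OF min econvex_midpoint_in_edom[OF h_convex u x]
            halpha_midpoint_le[OF u x, folded \<Phi>_def]])
    moreover have "(c * norm (u - x))\<^sup>2 \<le> (N (u - x))\<^sup>2"
      using c[of "u - x"] \<open>c > 0\<close> by (intro power_mono) auto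
    then have "\<alpha> / 4 * (c\<^sup>2 * (norm (u - x))\<^sup>2) \<le> \<alpha> / 4 * (N (u - x))\<^sup>2"
      using alpha_pos by (intro mult_left_mono) (auto simp: power_mult_distrib)
    ultimately show ?thesis by simp
  qed
  have "((\<lambda>p. real_of_ereal (fconj (halpha h w \<alpha>) p)) has_derivative (\<lambda>d. x \<bullet> d)) (at (- s))"
  proof (rule fconj_has_derivative_at[where K = "\<alpha> * c\<^sup>2 / 4"])
    show "halpha h w \<alpha> u < \<infinity> \<Longrightarrow> - s \<bullet> u - real_of_ereal (halpha h w \<alpha> u)
        + \<alpha> * c\<^sup>2 / 4 * (norm (u - x))\<^sup>2 \<le> - s \<bullet> x - real_of_ereal (halpha h w \<alpha> x)" for u
      using growth dom unfolding \<Phi>_def by blast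
  qed (use alpha_pos \<open>c > 0\<close> x dom halpha_not_minf in auto)
  then show ?thesis by (rule grad_eqI)
qed

end

theorem proposition4p1:
  fixes N :: "real^'n \<Rightarrow> real" and f :: "real^'n \<Rightarrow> real"
    and h w :: "real^'n \<Rightarrow> ereal" and L \<alpha> \<eta> :: real
    and x y s zb z v :: "nat \<Rightarrow> real^'n"
  assumes norm: "is_norm N"
    and L_pos: "L > 0"
    and f_convex: "convex_on UNIV f"
    and f_smooth: "L_smooth N L f"
    and h_proper: "eproper h" and h_convex: "econvex h" and h_closed: "eclosed h"
    and h_bdd: "bounded (edom h)"
    and w_nonneg: "\<forall>u. w u \<ge> 0" and w_closed: "eclosed w"
    and w_strong: "strongly_convex_on_wrt N (edom h) w"
    and w_max: "\<exists>u0\<in>edom h. w u0 < \<infinity> \<and> (\<forall>u\<in>edom h. w u \<le> w u0)"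
    and alpha_pos: "\<alpha> > 0"
    and eta_def: "\<eta> = \<alpha> / (L + \<alpha>)"
    and y0: "y 0 \<in> edom h"
    and x_step: "\<forall>k. is_argmin (\<lambda>u. ereal (s k \<bullet> u) + halpha h w \<alpha> u) (x (Suc k))"
    and y_step: "\<forall>k. y (Suc k) = (1 - \<eta>) *\<^sub>R y k + \<eta> *\<^sub>R x (Suc k)"
    and s_step: "\<forall>k. s (Suc k) = (1 - \<eta>) *\<^sub>R s k + \<eta> *\<^sub>R grad f (y k)"
    and z0: "z 0 \<in> edom (fconj (\<lambda>u. ereal (f u)))"
    and zb_step: "\<forall>k. is_argmin (\<lambda>u. ereal (- (v k \<bullet> u)) + fconj (\<lambda>u. ereal (f u)) u) (zb (Suc k))"
    and z_step: "\<forall>k. z (Suc k) = (1 - \<eta>) *\<^sub>R z k + \<eta> *\<^sub>R zb (Suc k)"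
    and v_step: "\<forall>k. v (Suc k) = (1 - \<eta>) *\<^sub>R v k
                   + \<eta> *\<^sub>R grad (\<lambda>u. real_of_ereal (fconj (halpha h w \<alpha>) u)) (- z k)"
    and init: "s 0 = z 0" "v 0 = y 0"
  shows "\<forall>k. y k = v k \<and> s k = z k
           \<and> x (Suc k) = grad (\<lambda>u. real_of_ereal (fconj (halpha h w \<alpha>) u)) (- z k)
           \<and> grad f (y k) = zb (Suc k)"
proof -
  let ?G = "grad (\<lambda>u. real_of_ereal (fconj (halpha h w \<alpha>) u))"
  have h_not_minf: "h u \<noteq> -\<infinity>" for u
    using h_proper unfolding eproper_def by blast
  have w_finite: "w u < \<infinity>" if "u \<in> edom h" for u
    using w_max that by (meson order.strict_trans1)
  obtain c where "c > 0" and c: "\<And>v. c * norm v \<le> N v"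
    using is_norm_ge_norm[OF norm] by blast
  have x_grad: "x (Suc k) = ?G (- s k)" for k
    using grad_fconj_halpha_eq_argmin[OF h_not_minf h_convex w_nonneg[rule_format] w_finite
        w_strong alpha_pos \<open>c > 0\<close> c x_step[rule_format, of k]] by simp
  have zb_grad: "grad f (y k) = zb (Suc k)" if "y k = v k" for k
    using argmin_fconj_eq_grad[OF f_convex _ zb_step[rule_format, of k]] f_smooth that
    unfolding L_smooth_def by simp
  have "y k = v k \<and> s k = z k" for k
  proof (induction k)
    case 0
    show ?case using init by simp
  next
    case (Suc k)
    then show ?case using x_grad[of k] zb_grad[of k] y_step s_step z_step v_step by simp
  qed
  then show ?thesis using x_grad zb_grad by simp
qed

end
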